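(* Let $G$ be the complete graph on $\{0,\dots,n\}$ oriented by $i\to j$ iff $i<j$. Then the polynomials $\mathbf{P}_s$, $s\in S_n$, form a basis of the space $$\operatorname{soc}(\mathcal{P}(G)):=\operatorname{span}\{p_{G\setminus T}: T\in\mathbb{B}(G)\}\subset\mathbb{R}[t(1),\dots,t(n)].$$
   Context: Polynomials are in variables $t=(t(1),\dots,t(n))$, and set $t(0):=0$. To the edge of $G$ between $i<j$ (vector $e_j-e_i$, $e_0:=0$) associate $p_x(t)=t(j)-t(i)$; for a set $Y$ of edges oriented as in $G$, $p_Y:=\prod_{x\in Y}p_x$. $\mathbb{B}(G)$ is the set of spanning trees of $G$ (edge sets), and $G\setminus T$ is the set of edges of $G$ not in $T$. $S_n$ is the set of permutations of $\{1,\dots,n\}$, extended by $s(0):=0$. For $s\in S_n$, $G^s$ is the reorientation of $G$ in which the edge $\{s(i),s(j)\}$ with $i<j$ is oriented $s(i)\to s(j)$, with associated polynomial $t(s(j))-t(s(i))$. The path tree $T_s$ has edges $\{s(k-1),s(k)\}$, $k=1,\dots,n$. Define $\mathbf{P}_s:=\prod (t(s(j))-t(s(i)))$, the product over all pairs $0\le i<j\le n$ such that $\{s(i),s(j)\}$ is not an edge of $T_s$ (i.e. $j\ne i+1$); this is $p$ of $G^s\setminus T_s$ with edges oriented as in $G^s$. *)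

theory Defs
  imports Complex_Main "HOL-Library.Poly_Mapping" "HOL-Combinatorics.Permutations"
begin

text \<open>Real polynomials in the variables t(1), t(2), ...: finitely supported maps from
  monomials (finitely supported exponent vectors) to real coefficients.\<close>
type_synonym rpoly = "(nat \<Rightarrow>\<^sub>0 nat) \<Rightarrow>\<^sub>0 real"

text \<open>The variable t(i); by convention t(0) = 0.\<close>
definition tvar :: "nat \<Rightarrow> rpoly" where
  "tvar i = (if i = 0 then 0 else Poly_Mapping.single (Poly_Mapping.single i 1) 1)"

definition pscale :: "real \<Rightarrow> rpoly \<Rightarrow> rpoly" where
  "pscale c p = Poly_Mapping.single 0 c * p"

abbreviation pspan :: "rpoly set \<Rightarrow> rpoly set" where
  "pspan \<equiv> module.span pscale"

abbreviation pdependent :: "rpoly set \<Rightarrow> bool" where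
  "pdependent \<equiv> module.dependent pscale"

definition cedges :: "nat \<Rightarrow> (nat \<times> nat) set" where
  "cedges n = {(i, j). i < j \<and> j \<le> n}"

definition connects :: "(nat \<times> nat) set \<Rightarrow> nat \<Rightarrow> nat \<Rightarrow> bool" where
  "connects T u v \<longleftrightarrow> (u, v) \<in> (T \<union> T\<inverse>)\<^sup>*"

text \<open>Spanning trees of the complete graph on {0..n}: edge sets which connect all vertices
  and are acyclic (no edge lies on a cycle, i.e. removing any edge disconnects its endpoints).\<close>
definition spanning_tree :: "nat \<Rightarrow> (nat \<times> nat) set \<Rightarrow> bool" where
  "spanning_tree n T \<longleftrightarrow> T \<subseteq> cedges n
     \<and> (\<forall>u\<in>{0..n}. \<forall>v\<in>{0..n}. connects T u v)
     \<and> (\<forall>(i, j)\<in>T. \<not> connects (T - {(i, j)}) i j)"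

definition pY :: "(nat \<times> nat) set \<Rightarrow> rpoly" where
  "pY Y = (\<Prod>(i, j)\<in>Y. tvar j - tvar i)"

definition Ps :: "nat \<Rightarrow> (nat \<Rightarrow> nat) \<Rightarrow> rpoly" where
  "Ps n s = (\<Prod>(i, j)\<in>{(i, j). i < j \<and> j \<le> n \<and> j \<noteq> i + 1}. tvar (s j) - tvar (s i))"

end

theory Submission
  imports Defs "HOL-Computational_Algebra.Polynomial"
begin

text \<open>Specialising \<open>t(v) \<mapsto> x^(\<sigma>\<inverse> v)\<close> turns every factor of \<open>P\<^sub>s\<close> into a difference of two
  distinct powers of \<open>x\<close>, of degree the larger exponent. The sum of these maxima over all pairs
  does not depend on the permutation, while over the consecutive pairs of \<open>\<rho> = \<sigma>\<inverse> s\<close> it exceeds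
  \<open>\<Sum>k. \<rho> k\<close> unless \<open>\<rho>\<close> is increasing. Hence \<open>P\<^sub>\<sigma>\<close> reaches a degree that every other \<open>P\<^sub>s\<close> stays
  below, and these top coefficients make the \<open>P\<^sub>s\<close> distinct and linearly independent.

  Each \<open>P\<^sub>s\<close> is \<open>\<plusminus>p\<^bsub>G\<setminus>T\<^sub>s\<^esub>\<close> for the path tree \<open>T\<^sub>s\<close>. Conversely, induct on \<open>n\<close>. If the top
  vertex \<open>n\<close> has two neighbours \<open>a < b\<close> in \<open>T\<close>, then \<open>p\<^bsub>G\<setminus>T\<^esub> = p\<^bsub>G\<setminus>T\<^sub>1\<^esub> - p\<^bsub>G\<setminus>T\<^sub>2\<^esub>\<close>,
  where \<open>T\<^sub>1\<close>, \<open>T\<^sub>2\<close> replace the edge \<open>an\<close>, resp. \<open>bn\<close>, by \<open>ab\<close> and so lower the degree of \<open>n\<close>.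
  If \<open>n\<close> is a leaf at \<open>a\<close>, then \<open>p\<^bsub>G\<setminus>T\<^esub>\<close> is \<open>p\<close> of the smaller tree times
  \<open>\<Prod>v\<noteq>a. (t(n) - t(v))\<close>, and \<open>P\<^sub>s \<cdot> \<Prod>v\<noteq>s(k). (t(n) - t(v))\<close> lies in the span by downward induction
  on \<open>k\<close>: consecutive steps differ by \<open>\<plusminus>\<close> the \<open>P\<close> of \<open>s\<close> with \<open>n\<close> inserted after position \<open>k\<close>.\<close>

interpretation rpoly: vector_space pscale
  by unfold_locales
    (simp_all add: pscale_def single_add distrib_left distrib_right mult_single mult.assoc[symmetric])

section \<open>Specialising to univariate polynomials\<close>

definition eval_monom :: "(nat \<Rightarrow> real poly) \<Rightarrow> (nat \<Rightarrow>\<^sub>0 nat) \<Rightarrow> real poly" where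
  "eval_monom X m = (\<Prod>i\<in>Poly_Mapping.keys m. X i ^ Poly_Mapping.lookup m i)"

definition eval_rpoly :: "(nat \<Rightarrow> real poly) \<Rightarrow> rpoly \<Rightarrow> real poly" where
  "eval_rpoly X p = (\<Sum>m\<in>Poly_Mapping.keys p. smult (Poly_Mapping.lookup p m) (eval_monom X m))"

lemma eval_monom_superset:
  "finite S \<Longrightarrow> Poly_Mapping.keys m \<subseteq> S \<Longrightarrow>
    eval_monom X m = (\<Prod>i\<in>S. X i ^ Poly_Mapping.lookup m i)"
  unfolding eval_monom_def by (rule prod.mono_neutral_left) (auto simp: in_keys_iff)

lemma eval_rpoly_superset:
  "finite S \<Longrightarrow> Poly_Mapping.keys p \<subseteq> S \<Longrightarrow>
    eval_rpoly X p = (\<Sum>m\<in>S. smult (Poly_Mapping.lookup p m) (eval_monom X m))"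
  unfolding eval_rpoly_def by (rule sum.mono_neutral_left) (auto simp: in_keys_iff)

lemma eval_monom_add: "eval_monom X (a + b) = eval_monom X a * eval_monom X b"
proof -
  let ?S = "Poly_Mapping.keys a \<union> Poly_Mapping.keys b"
  have "Poly_Mapping.keys (a + b) \<subseteq> ?S"
    by (auto simp: in_keys_iff lookup_add)
  then show ?thesis
    by (simp add: eval_monom_superset[of ?S] lookup_add power_add prod.distrib)
qed

lemma eval_rpoly_add: "eval_rpoly X (p + q) = eval_rpoly X p + eval_rpoly X q"
proof -
  let ?S = "Poly_Mapping.keys p \<union> Poly_Mapping.keys q"
  have "Poly_Mapping.keys (p + q) \<subseteq> ?S"
    by (auto simp: in_keys_iff lookup_add)
  then show ?thesis
    by (simp add: eval_rpoly_superset[of ?S] lookup_add smult_add_left sum.distrib)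
qed

lemma eval_rpoly_single: "eval_rpoly X (Poly_Mapping.single m c) = smult c (eval_monom X m)"
  by (simp add: eval_rpoly_def)

lemma eval_rpoly_zero [simp]: "eval_rpoly X 0 = 0"
  by (simp add: eval_rpoly_def)

lemma eval_rpoly_sum: "eval_rpoly X (sum f A) = (\<Sum>a\<in>A. eval_rpoly X (f a))"
  by (induction A rule: infinite_finite_induct) (simp_all add: eval_rpoly_add)

lemma poly_mapping_sum_single:
  "p = (\<Sum>m\<in>Poly_Mapping.keys p. Poly_Mapping.single m (Poly_Mapping.lookup p m))"
  by (rule poly_mapping_eqI) (simp add: lookup_sum lookup_single when_def in_keys_iff)

lemma eval_rpoly_mult: "eval_rpoly X (p * q) = eval_rpoly X p * eval_rpoly X q"
proof -
  let ?c = "Poly_Mapping.lookup"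
  have "p * q = (\<Sum>a\<in>Poly_Mapping.keys p. \<Sum>b\<in>Poly_Mapping.keys q.
      Poly_Mapping.single (a + b) (?c p a * ?c q b))"
    by (subst poly_mapping_sum_single[of p], subst poly_mapping_sum_single[of q])
      (simp add: sum_product mult_single)
  then have "eval_rpoly X (p * q) = (\<Sum>a\<in>Poly_Mapping.keys p. \<Sum>b\<in>Poly_Mapping.keys q.
      smult (?c p a) (eval_monom X a) * smult (?c q b) (eval_monom X b))"
    by (simp add: eval_rpoly_sum eval_rpoly_single eval_monom_add mult.commute mult.left_commute)
  then show ?thesis
    by (simp add: eval_rpoly_def sum_product)
qed

lemma eval_rpoly_diff: "eval_rpoly X (p - q) = eval_rpoly X p - eval_rpoly X q"
  using eval_rpoly_add[of X "p - q" q] by simp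

lemma eval_rpoly_one [simp]: "eval_rpoly X 1 = 1"
  using eval_rpoly_single[of X 0 1] by (simp add: eval_monom_def flip: single_one)

lemma eval_rpoly_prod: "eval_rpoly X (prod f A) = (\<Prod>a\<in>A. eval_rpoly X (f a))"
  by (induction A rule: infinite_finite_induct) (simp_all add: eval_rpoly_mult)

lemma eval_rpoly_tvar: "eval_rpoly X (tvar i) = (if i = 0 then 0 else X i)"
  by (simp add: tvar_def eval_rpoly_def eval_monom_def)

lemma eval_rpoly_pscale: "eval_rpoly X (pscale c p) = smult c (eval_rpoly X p)"
  by (simp add: pscale_def eval_rpoly_mult eval_rpoly_single eval_monom_def)

definition xpow :: "nat \<Rightarrow> real poly" where
  "xpow k = (if k = 0 then 0 else monom 1 k)"

lemma xpow_diff_nonzero_degree: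
  assumes "p \<noteq> q"
  shows "xpow q - xpow p \<noteq> 0 \<and> degree (xpow q - xpow p) = max p q"
proof -
  let ?d = "xpow q - xpow p"
  have "coeff ?d (max p q) \<noteq> 0"
    using assms by (auto simp: xpow_def coeff_monom max_def)
  moreover have "degree ?d \<le> max p q"
    by (intro degree_diff_le) (auto simp: xpow_def intro: order.trans[OF degree_monom_le])
  ultimately show ?thesis
    by (metis coeff_0 le_antisym le_degree)
qed

section \<open>Pairs and permutations\<close>

lemma permutes_le_iff:
  fixes \<rho> :: "nat \<Rightarrow> nat"
  assumes "\<rho> permutes {1..n}"
  shows "\<rho> x \<le> n \<longleftrightarrow> x \<le> n"
  using permutes_in_image[OF assms, of x] permutes_not_in[OF assms, of x]
  by (cases "x = 0") auto

lemma permutes_zero: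
  fixes \<rho> :: "nat \<Rightarrow> nat"
  shows "\<rho> permutes {1..n} \<Longrightarrow> \<rho> 0 = 0"
  by (simp add: permutes_not_in)

definition sort_pair :: "(nat \<Rightarrow> nat) \<Rightarrow> nat \<times> nat \<Rightarrow> nat \<times> nat" where
  "sort_pair f e = (min (f (fst e)) (f (snd e)), max (f (fst e)) (f (snd e)))"

lemma sort_pair_inverse:
  assumes "\<And>x. g (f x) = x" and "fst e < snd e"
  shows "sort_pair g (sort_pair f e) = e"
  using assms by (cases "f (fst e) \<le> f (snd e)") (auto simp: sort_pair_def min_def max_def)

lemma sort_pair_in_cedges:
  assumes "\<rho> permutes {1..n}" and "e \<in> cedges n"
  shows "sort_pair \<rho> e \<in> cedges n"
proof -
  obtain i j where e: "e = (i, j)" "i < j" "j \<le> n"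
    using assms(2) by (auto simp: cedges_def)
  have "\<rho> i \<noteq> \<rho> j"
    using e(2) by (simp add: inj_eq[OF permutes_inj[OF assms(1)]])
  moreover have "\<rho> i \<le> n" "\<rho> j \<le> n"
    using e by (simp_all add: permutes_le_iff[OF assms(1)])
  ultimately show ?thesis
    unfolding e(1) by (auto simp: sort_pair_def cedges_def min_def max_def)
qed

lemma bij_betw_sort_pair_cedges:
  assumes "\<rho> permutes {1..n}"
  shows "bij_betw (sort_pair \<rho>) (cedges n) (cedges n)"
proof (rule bij_betw_byWitness[where f' = "sort_pair (inv \<rho>)"])
  have inverses: "\<And>x. inv \<rho> (\<rho> x) = x" "\<And>x. \<rho> (inv \<rho> x) = x"
    using permutes_inverses[OF assms] by auto
  show "\<forall>e\<in>cedges n. sort_pair (inv \<rho>) (sort_pair \<rho> e) = e"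
    "\<forall>e\<in>cedges n. sort_pair \<rho> (sort_pair (inv \<rho>) e) = e"
    using sort_pair_inverse inverses by (auto simp: cedges_def)
  show "sort_pair \<rho> ` cedges n \<subseteq> cedges n" "sort_pair (inv \<rho>) ` cedges n \<subseteq> cedges n"
    using sort_pair_in_cedges permutes_inv[OF assms] assms by auto
qed

lemma sum_max_cedges_permutes:
  assumes "\<rho> permutes {1..n}"
  shows "(\<Sum>e\<in>cedges n. max (\<rho> (fst e)) (\<rho> (snd e))) = (\<Sum>e\<in>cedges n. snd e)"
  using sum.reindex_bij_betw[OF bij_betw_sort_pair_cedges[OF assms], of snd]
  by (simp add: sort_pair_def)

definition nonadjacent_pairs :: "nat \<Rightarrow> (nat \<times> nat) set" where
  "nonadjacent_pairs n = {(i, j). i < j \<and> j \<le> n \<and> j \<noteq> i + 1}"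

definition adjacent_pairs :: "nat \<Rightarrow> (nat \<times> nat) set" where
  "adjacent_pairs n = (\<lambda>k. (k - 1, k)) ` {1..n}"

lemma finite_cedges [simp]: "finite (cedges n)"
  by (rule finite_subset[of _ "{0..n} \<times> {0..n}"]) (auto simp: cedges_def)

lemma finite_nonadjacent_pairs [simp]: "finite (nonadjacent_pairs n)"
  by (rule finite_subset[of _ "{0..n} \<times> {0..n}"]) (auto simp: nonadjacent_pairs_def)

lemma cedges_split:
  "cedges n = nonadjacent_pairs n \<union> adjacent_pairs n"
  "nonadjacent_pairs n \<inter> adjacent_pairs n = {}"
  by (auto simp: cedges_def nonadjacent_pairs_def adjacent_pairs_def image_def)

lemma sum_cedges_split:
  "(\<Sum>e\<in>cedges n. g e) = (\<Sum>e\<in>nonadjacent_pairs n. g e) + (\<Sum>k=1..n. g (k - 1, k))"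
proof -
  have "inj_on (\<lambda>k. (k - 1, k)) {1..n}"
    by (auto simp: inj_on_def)
  then have "(\<Sum>e\<in>adjacent_pairs n. g e) = (\<Sum>k=1..n. g (k - 1, k))"
    by (simp add: adjacent_pairs_def sum.reindex)
  moreover have "finite (adjacent_pairs n)"
    by (simp add: adjacent_pairs_def)
  ultimately show ?thesis
    by (simp add: cedges_split sum.union_disjoint)
qed

lemma permutes_increasing_eq_id:
  fixes \<rho> :: "nat \<Rightarrow> nat"
  assumes \<rho>: "\<rho> permutes {1..n}" and incr: "\<forall>k\<in>{1..n}. \<rho> (k - 1) < \<rho> k"
  shows "\<rho> = id"
proof (rule permutes_natset_ge[OF \<rho>])
  have "k \<le> \<rho> k" if "k \<le> n" for k
    using that
  proof (induction k)
    case (Suc k)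
    then show ?case using incr[rule_format, of "Suc k"] by simp
  qed simp
  then show "\<forall>k\<in>{1..n}. k \<le> \<rho> k" by simp
qed

text \<open>The path pairs contribute at least \<open>\<Sum>k. \<rho> k\<close>, with equality only for increasing \<open>\<rho>\<close>,
  while all pairs together contribute the same as for the identity.\<close>
lemma sum_max_nonadjacent_less:
  fixes \<rho> :: "nat \<Rightarrow> nat"
  assumes \<rho>: "\<rho> permutes {1..n}" and "\<rho> \<noteq> id"
  shows "(\<Sum>e\<in>nonadjacent_pairs n. max (\<rho> (fst e)) (\<rho> (snd e))) < (\<Sum>e\<in>nonadjacent_pairs n. snd e)"
proof -
  have all_pairs: "(\<Sum>e\<in>nonadjacent_pairs n. max (\<rho> (fst e)) (\<rho> (snd e))) + (\<Sum>k=1..n. max (\<rho> (k - 1)) (\<rho> k))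
      = (\<Sum>e\<in>nonadjacent_pairs n. snd e) + (\<Sum>k=1..n. k)"
    using sum_max_cedges_permutes[OF \<rho>] by (simp add: sum_cedges_split)
  have sum_perm: "(\<Sum>k=1..n. \<rho> k) = (\<Sum>k=1..n. k)"
    using sum.reindex_bij_betw[OF permutes_imp_bij[OF \<rho>], of id] by simp
  obtain k where k: "k \<in> {1..n}" "\<not> \<rho> (k - 1) < \<rho> k"
    using permutes_increasing_eq_id[OF \<rho>] assms(2) by blast
  moreover have "\<rho> (k - 1) \<noteq> \<rho> k"
    using k(1) by (auto simp: inj_eq[OF permutes_inj[OF \<rho>]])
  ultimately have "\<rho> k < max (\<rho> (k - 1)) (\<rho> k)"
    by simp
  then have "(\<Sum>k=1..n. \<rho> k) < (\<Sum>k=1..n. max (\<rho> (k - 1)) (\<rho> k))"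
    using k(1) by (intro sum_strict_mono_ex1) auto
  then show ?thesis
    using all_pairs sum_perm by linarith
qed

section \<open>Linear independence\<close>

lemma (in vector_space) independent_if_separating_functionals:
  assumes "\<And>v. v \<in> S \<Longrightarrow> \<exists>\<phi>. (\<forall>x y. \<phi> (x + y) = \<phi> x + \<phi> y) \<and> (\<forall>c x. \<phi> (scale c x) = c * \<phi> x)
      \<and> \<phi> v \<noteq> 0 \<and> (\<forall>w\<in>S - {v}. \<phi> w = 0)"
  shows "\<not> dependent S"
proof
  assume "dependent S"
  then obtain t u v where t: "finite t" "t \<subseteq> S" "(\<Sum>w\<in>t. scale (u w) w) = 0"
    and v: "v \<in> t" "u v \<noteq> 0"
    unfolding dependent_explicit by blast
  have "v \<in> S"
    using v(1) t(2) by blast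
  then obtain \<phi> where add: "\<forall>x y. \<phi> (x + y) = \<phi> x + \<phi> y" and scale: "\<forall>c x. \<phi> (scale c x) = c * \<phi> x"
    and "\<phi> v \<noteq> 0" and vanish: "\<forall>w\<in>S - {v}. \<phi> w = 0"
    using assms by blast
  have "\<phi> 0 = 0"
    using add by (metis add_cancel_right_right)
  then have hom_sum: "\<phi> (sum f A) = (\<Sum>a\<in>A. \<phi> (f a))" for f :: "'b \<Rightarrow> 'b" and A
    by (induction A rule: infinite_finite_induct) (simp_all add: add)
  have "0 = \<phi> (\<Sum>w\<in>t. scale (u w) w)"
    using t(3) \<open>\<phi> 0 = 0\<close> by simp
  also have "\<dots> = (\<Sum>w\<in>t. u w * \<phi> w)"
    using scale by (simp add: hom_sum)
  also have "\<dots> = u v * \<phi> v + (\<Sum>w\<in>t - {v}. u w * \<phi> w)"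
    by (rule sum.remove[OF t(1) v(1)])
  also have "(\<Sum>w\<in>t - {v}. u w * \<phi> w) = 0"
  proof (rule sum.neutral, rule ballI)
    fix w assume "w \<in> t - {v}"
    then have "\<phi> w = 0"
      using t(2) vanish by blast
    then show "u w * \<phi> w = 0"
      by simp
  qed
  finally show False
    using v(2) \<open>\<phi> v \<noteq> 0\<close> by simp
qed

definition specialise :: "(nat \<Rightarrow> nat) \<Rightarrow> rpoly \<Rightarrow> real poly" where
  "specialise \<sigma> = eval_rpoly (\<lambda>v. monom 1 (inv \<sigma> v))"

lemma specialise_tvar:
  fixes \<sigma> :: "nat \<Rightarrow> nat"
  assumes "\<sigma> permutes {1..n}"
  shows "specialise \<sigma> (tvar v) = xpow (inv \<sigma> v)"
proof -
  have "inv \<sigma> v = 0 \<longleftrightarrow> v = 0"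
    using permutes_zero[OF assms] permutes_zero[OF permutes_inv[OF assms]]
      permutes_inverses(1)[OF assms] by metis
  then show ?thesis
    by (simp add: specialise_def eval_rpoly_tvar xpow_def)
qed

lemma Ps_eq: "Ps n s = (\<Prod>e\<in>nonadjacent_pairs n. tvar (s (snd e)) - tvar (s (fst e)))"
  unfolding Ps_def nonadjacent_pairs_def by (simp add: case_prod_beta)

lemma specialise_Ps:
  fixes \<sigma> s :: "nat \<Rightarrow> nat"
  assumes \<sigma>: "\<sigma> permutes {1..n}" and s: "s permutes {1..n}"
  defines "\<rho> \<equiv> inv \<sigma> \<circ> s"
  shows "specialise \<sigma> (Ps n s) \<noteq> 0"
    and "degree (specialise \<sigma> (Ps n s)) = (\<Sum>e\<in>nonadjacent_pairs n. max (\<rho> (fst e)) (\<rho> (snd e)))"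
proof -
  have "specialise \<sigma> (Ps n s)
      = (\<Prod>e\<in>nonadjacent_pairs n. specialise \<sigma> (tvar (s (snd e))) - specialise \<sigma> (tvar (s (fst e))))"
    by (simp add: specialise_def Ps_eq eval_rpoly_prod eval_rpoly_diff)
  also have "\<dots> = (\<Prod>e\<in>nonadjacent_pairs n. xpow (\<rho> (snd e)) - xpow (\<rho> (fst e)))"
    by (simp add: specialise_tvar[OF \<sigma>] \<rho>_def)
  finally have factors: "specialise \<sigma> (Ps n s) = \<dots>" .
  have "inj \<rho>"
    unfolding \<rho>_def by (rule permutes_inj[OF permutes_compose[OF s permutes_inv[OF \<sigma>]]])
  then have "xpow (\<rho> (snd e)) - xpow (\<rho> (fst e)) \<noteq> 0 \<and>
      degree (xpow (\<rho> (snd e)) - xpow (\<rho> (fst e))) = max (\<rho> (fst e)) (\<rho> (snd e))"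
    if "e \<in> nonadjacent_pairs n" for e
    using that by (intro xpow_diff_nonzero_degree) (auto simp: nonadjacent_pairs_def inj_eq)
  then show "specialise \<sigma> (Ps n s) \<noteq> 0"
    and "degree (specialise \<sigma> (Ps n s)) = (\<Sum>e\<in>nonadjacent_pairs n. max (\<rho> (fst e)) (\<rho> (snd e)))"
    unfolding factors by (simp_all add: prod_zero_iff degree_prod_eq_sum_degree)
qed

lemma degree_specialise_Ps_self:
  fixes \<sigma> :: "nat \<Rightarrow> nat"
  assumes \<sigma>: "\<sigma> permutes {1..n}"
  shows "degree (specialise \<sigma> (Ps n \<sigma>)) = (\<Sum>e\<in>nonadjacent_pairs n. snd e)"
  using specialise_Ps(2)[OF \<sigma> \<sigma>]
  by (simp add: permutes_inv_o(2)[OF \<sigma>] nonadjacent_pairs_def max_def case_prod_beta)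

lemma degree_specialise_Ps_less:
  fixes \<sigma> s :: "nat \<Rightarrow> nat"
  assumes \<sigma>: "\<sigma> permutes {1..n}" and s: "s permutes {1..n}" and "s \<noteq> \<sigma>"
  shows "degree (specialise \<sigma> (Ps n s)) < (\<Sum>e\<in>nonadjacent_pairs n. snd e)"
proof -
  have "inv \<sigma> \<circ> s \<noteq> id"
  proof
    assume "inv \<sigma> \<circ> s = id"
    then have "\<sigma> \<circ> (inv \<sigma> \<circ> s) = \<sigma>"
      by simp
    then show False
      using assms(3) by (simp add: o_assoc permutes_inv_o(1)[OF \<sigma>])
  qed
  then show ?thesis
    using specialise_Ps(2)[OF \<sigma> s]
      sum_max_nonadjacent_less[OF permutes_compose[OF s permutes_inv[OF \<sigma>]]] by simp
qed

lemma inj_on_Ps: "inj_on (Ps n) {s. s permutes {1..n}}"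
proof (rule inj_onI, rule ccontr)
  fix s \<sigma> assume "s \<in> {s. s permutes {1..n}}" "\<sigma> \<in> {s. s permutes {1..n}}"
    and "Ps n s = Ps n \<sigma>" "s \<noteq> \<sigma>"
  then show False
    using degree_specialise_Ps_self[of \<sigma> n] degree_specialise_Ps_less[of \<sigma> n s] by simp
qed

lemma not_pdependent_Ps: "\<not> pdependent (Ps n ` {s. s permutes {1..n}})"
proof (rule rpoly.independent_if_separating_functionals)
  fix v assume "v \<in> Ps n ` {s. s permutes {1..n}}"
  then obtain \<sigma> where \<sigma>: "\<sigma> permutes {1..n}" and v: "v = Ps n \<sigma>"
    by blast
  define D where "D = (\<Sum>e\<in>nonadjacent_pairs n. snd e)"
  define \<phi> where "\<phi> p = coeff (specialise \<sigma> p) D" for p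
  have "\<phi> (x + y) = \<phi> x + \<phi> y" "\<phi> (pscale c x) = c * \<phi> x" for x y c
    by (simp_all add: \<phi>_def specialise_def eval_rpoly_add eval_rpoly_pscale)
  moreover have "\<phi> v \<noteq> 0"
    using specialise_Ps(1)[OF \<sigma> \<sigma>] degree_specialise_Ps_self[OF \<sigma>]
    by (metis \<phi>_def D_def v leading_coeff_neq_0)
  moreover have "\<phi> w = 0" if w: "w \<in> Ps n ` {s. s permutes {1..n}} - {v}" for w
  proof -
    obtain s where s: "s permutes {1..n}" "s \<noteq> \<sigma>" and w: "w = Ps n s"
      using w v by blast
    show ?thesis
      using degree_specialise_Ps_less[OF \<sigma> s] by (simp add: \<phi>_def D_def w coeff_eq_0)
  qed
  ultimately show "\<exists>\<phi>. (\<forall>x y. \<phi> (x + y) = \<phi> x + \<phi> y) \<and> (\<forall>c x. \<phi> (pscale c x) = c * \<phi> x)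
      \<and> \<phi> v \<noteq> 0 \<and> (\<forall>w\<in>Ps n ` {s. s permutes {1..n}} - {v}. \<phi> w = 0)"
    by blast
qed

section \<open>Connectivity\<close>

lemma connects_refl [simp]: "connects T u u"
  by (simp add: connects_def)

lemma connects_sym: "connects T u v \<Longrightarrow> connects T v u"
proof -
  have "(T \<union> T\<inverse>)\<inverse> = T \<union> T\<inverse>"
    by auto
  then show "connects T u v \<Longrightarrow> connects T v u"
    unfolding connects_def by (metis rtrancl_converseI)
qed

lemma connects_trans: "connects T u v \<Longrightarrow> connects T v w \<Longrightarrow> connects T u w"
  unfolding connects_def by (rule rtrancl_trans)

lemma connects_edge: "(u, v) \<in> T \<Longrightarrow> connects T u v" "(u, v) \<in> T \<Longrightarrow> connects T v u"
  unfolding connects_def by auto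

lemma connects_mono: "S \<subseteq> T \<Longrightarrow> connects S u v \<Longrightarrow> connects T u v"
  unfolding connects_def by (rule rtrancl_mono[THEN subsetD]) auto

lemma connects_induct [consumes 1, case_names refl step]:
  assumes "connects T u v"
    and "P u"
    and "\<And>x y. connects T u x \<Longrightarrow> (x, y) \<in> T \<or> (y, x) \<in> T \<Longrightarrow> P x \<Longrightarrow> P y"
  shows "P v"
  using assms(1) unfolding connects_def
proof (induction rule: rtrancl_induct)
  case (step x y)
  then show ?case
    using assms(3)[of x y] by (auto simp: connects_def)
qed (rule assms(2))

lemma connects_imp_eq:
  assumes "\<And>x y. (x, y) \<in> T \<Longrightarrow> f x = f y" and "connects T u v"
  shows "f u = f v"
  using assms(2) by (induction rule: connects_induct) (auto dest: assms(1))

lemma connects_subst: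
  assumes "\<And>x y. (x, y) \<in> S \<Longrightarrow> connects T x y" and "connects S u v"
  shows "connects T u v"
  using assms(2)
proof (induction rule: connects_induct)
  case (step x y)
  then have "connects T x y"
    using assms(1) connects_sym by blast
  with step.IH show ?case
    by (rule connects_trans)
qed simp

lemma connects_insert:
  assumes "connects (insert (a, b) S) u v"
  shows "connects S u v \<or> (connects S u a \<and> connects S b v) \<or> (connects S u b \<and> connects S a v)"
  using assms
proof (induction rule: connects_induct)
  case (step x y)
  consider "connects S x y" | "x = a" "y = b" | "x = b" "y = a"
    using step.hyps(2) by (auto intro: connects_edge)
  then show ?case
  proof cases
    case 1
    with step.IH show ?thesis
      by (elim disjE conjE) (blast intro: connects_trans[OF _ 1])+
  qed (use step.IH in \<open>auto intro: connects_trans\<close>)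
qed simp

lemma connects_imp_incident:
  assumes "connects T u v" "u \<noteq> v"
  shows "\<exists>e\<in>T. fst e = v \<or> snd e = v"
  using assms by (induction rule: connects_induct) force+

section \<open>Path trees\<close>

definition path_tree :: "nat \<Rightarrow> (nat \<Rightarrow> nat) \<Rightarrow> (nat \<times> nat) set" where
  "path_tree n s = sort_pair s ` adjacent_pairs n"

lemma sort_pair_doubleton: "{fst (sort_pair s e), snd (sort_pair s e)} = {s (fst e), s (snd e)}"
  by (auto simp: sort_pair_def min_def max_def)

lemma connects_sort_pair: "sort_pair s e \<in> T \<Longrightarrow> connects T (s (fst e)) (s (snd e))"
  by (cases "s (fst e) \<le> s (snd e)") (auto simp: sort_pair_def min_def max_def intro: connects_edge)

lemma inv_image_doubleton:
  fixes s :: "nat \<Rightarrow> nat"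
  assumes "s permutes S" and "{x, y} = {s a, s b}"
  shows "{inv s x, inv s y} = {a, b}"
proof -
  have "inv s ` {x, y} = inv s ` {s a, s b}"
    using assms(2) by simp
  then show ?thesis
    by (simp add: permutes_inverses(2)[OF assms(1)])
qed

lemma connects_path_tree:
  fixes s :: "nat \<Rightarrow> nat"
  assumes s: "s permutes {1..n}" and "u \<le> n" "v \<le> n"
  shows "connects (path_tree n s) u v"
proof -
  have along_path: "connects (path_tree n s) 0 (s k)" if "k \<le> n" for k
    using that
  proof (induction k)
    case 0
    then show ?case
      by (simp add: permutes_zero[OF s])
  next
    case (Suc k)
    have "(k, Suc k) \<in> adjacent_pairs n"
      using Suc.prems unfolding adjacent_pairs_def by (intro image_eqI[of _ _ "Suc k"]) auto
    then have "connects (path_tree n s) (s k) (s (Suc k))"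
      using connects_sort_pair[of s "(k, Suc k)"] by (simp add: path_tree_def)
    with Suc show ?case
      using connects_trans by simp
  qed
  have from_0: "connects (path_tree n s) 0 x" if "x \<le> n" for x
    using along_path[of "inv s x"] that permutes_le_iff[OF permutes_inv[OF s], of x]
    by (simp add: permutes_inverses(1)[OF s])
  show ?thesis
    using connects_sym[OF from_0[OF \<open>u \<le> n\<close>]] from_0[OF \<open>v \<le> n\<close>] by (rule connects_trans)
qed

lemma path_tree_acyclic:
  fixes s :: "nat \<Rightarrow> nat"
  assumes s: "s permutes {1..n}" and ij: "(i, j) \<in> path_tree n s"
  shows "\<not> connects (path_tree n s - {(i, j)}) i j"
proof
  obtain k where k: "k \<in> {1..n}" "(i, j) = sort_pair s (k - 1, k)"
    using ij by (auto simp: path_tree_def adjacent_pairs_def)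
  assume "connects (path_tree n s - {(i, j)}) i j"
  text \<open>The side of the cut at position \<open>k\<close> is constant along the remaining path edges.\<close>
  moreover have "inv s x < k \<longleftrightarrow> inv s y < k" if xy: "(x, y) \<in> path_tree n s - {(i, j)}" for x y
  proof -
    obtain k' where k': "k' \<in> {1..n}" "(x, y) = sort_pair s (k' - 1, k')"
      using xy by (auto simp: path_tree_def adjacent_pairs_def)
    have "k' \<noteq> k"
      using xy k(2) k'(2) by auto
    have "{x, y} = {s (k' - 1), s k'}"
      using sort_pair_doubleton[of s "(k' - 1, k')"] unfolding k'(2)[symmetric] by simp
    then have "{inv s x, inv s y} = {k' - 1, k'}"
      by (rule inv_image_doubleton[OF s])
    then show ?thesis
      using k'(1) \<open>k' \<noteq> k\<close> by (auto simp: doubleton_eq_iff)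
  qed
  ultimately have "inv s i < k \<longleftrightarrow> inv s j < k"
    by (rule connects_imp_eq[rotated])
  moreover have "{i, j} = {s (k - 1), s k}"
    using sort_pair_doubleton[of s "(k - 1, k)"] unfolding k(2)[symmetric] by simp
  then have "{inv s i, inv s j} = {k - 1, k}"
    by (rule inv_image_doubleton[OF s])
  ultimately show False
    using k(1) by (auto simp: doubleton_eq_iff)
qed

lemma spanning_tree_path_tree:
  fixes s :: "nat \<Rightarrow> nat"
  assumes s: "s permutes {1..n}"
  shows "spanning_tree n (path_tree n s)"
proof -
  have "adjacent_pairs n \<subseteq> cedges n"
    using cedges_split(1) by blast
  then have "path_tree n s \<subseteq> cedges n"
    using sort_pair_in_cedges[OF s] by (auto simp: path_tree_def)
  then show ?thesis
    using connects_path_tree[OF s] path_tree_acyclic[OF s] unfolding spanning_tree_def by auto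
qed

lemma prod_eq_or_eq_neg:
  fixes f g :: "'a \<Rightarrow> 'b::comm_ring_1"
  assumes "\<And>a. a \<in> A \<Longrightarrow> f a = g a \<or> f a = - g a"
  shows "prod f A = prod g A \<or> prod f A = - prod g A"
  using assms
proof (induction A rule: infinite_finite_induct)
  case (insert x F)
  then have "f x = g x \<or> f x = - g x" "prod f F = prod g F \<or> prod f F = - prod g F"
    by simp_all
  then show ?case
    using insert.hyps by (elim disjE) simp_all
qed simp_all

lemma pY_eq: "pY Y = (\<Prod>e\<in>Y. tvar (snd e) - tvar (fst e))"
  unfolding pY_def by (simp add: case_prod_beta)

lemma sort_pair_nonadjacent_pairs:
  fixes s :: "nat \<Rightarrow> nat"
  assumes s: "s permutes {1..n}"
  shows "sort_pair s ` nonadjacent_pairs n = cedges n - path_tree n s"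
    and "inj_on (sort_pair s) (nonadjacent_pairs n)"
proof -
  have bij: "bij_betw (sort_pair s) (cedges n) (cedges n)"
    by (rule bij_betw_sort_pair_cedges[OF s])
  then have inj: "inj_on (sort_pair s) (cedges n)"
    by (rule bij_betw_imp_inj_on)
  have adjacent: "adjacent_pairs n \<subseteq> cedges n"
    and nonadjacent: "nonadjacent_pairs n = cedges n - adjacent_pairs n"
    using cedges_split by blast+
  show "inj_on (sort_pair s) (nonadjacent_pairs n)"
    unfolding nonadjacent using inj by (rule inj_on_diff)
  have "sort_pair s ` (cedges n - adjacent_pairs n)
      = sort_pair s ` cedges n - sort_pair s ` adjacent_pairs n"
    by (rule inj_on_image_set_diff[OF inj _ adjacent]) blast
  then show "sort_pair s ` nonadjacent_pairs n = cedges n - path_tree n s"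
    unfolding nonadjacent path_tree_def using bij_betw_imp_surj_on[OF bij] by simp
qed

lemma Ps_eq_pY_path_tree:
  fixes s :: "nat \<Rightarrow> nat"
  assumes s: "s permutes {1..n}"
  shows "Ps n s = pY (cedges n - path_tree n s) \<or> Ps n s = - pY (cedges n - path_tree n s)"
proof -
  let ?g = "\<lambda>e. tvar (snd e) - tvar (fst e)"
  have "pY (cedges n - path_tree n s) = (\<Prod>e\<in>nonadjacent_pairs n. ?g (sort_pair s e))"
    using prod.reindex[OF sort_pair_nonadjacent_pairs(2)[OF s], of ?g]
    by (simp add: pY_eq sort_pair_nonadjacent_pairs(1)[OF s])
  moreover have "Ps n s = (\<Prod>e\<in>nonadjacent_pairs n. ?g (sort_pair s e))
      \<or> Ps n s = - (\<Prod>e\<in>nonadjacent_pairs n. ?g (sort_pair s e))"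
    unfolding Ps_eq
    by (rule prod_eq_or_eq_neg, cases "s (fst e) \<le> s (snd e)") (auto simp: sort_pair_def min_def max_def)
  ultimately show ?thesis
    by simp
qed

lemma Ps_in_span_pY:
  fixes s :: "nat \<Rightarrow> nat"
  assumes s: "s permutes {1..n}"
  shows "Ps n s \<in> pspan {pY (cedges n - T) | T. spanning_tree n T}"
proof -
  have "pY (cedges n - path_tree n s) \<in> pspan {pY (cedges n - T) | T. spanning_tree n T}"
    using spanning_tree_path_tree[OF s] by (blast intro: rpoly.span_base)
  then show ?thesis
    using Ps_eq_pY_path_tree[OF s] rpoly.span_neg by auto
qed

section \<open>Inserting the top vertex into a permutation\<close>

lemma permutes_image_atLeast0AtMost:
  fixes s :: "nat \<Rightarrow> nat"
  assumes "s permutes {1..m}"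
  shows "s ` {0..m} = {0..m}"
proof -
  have "{0..m} = insert 0 {1..m}"
    by auto
  then show ?thesis
    using permutes_image[OF assms] permutes_zero[OF assms] by simp
qed

lemma prod_permutes_image:
  fixes s :: "nat \<Rightarrow> nat"
  assumes "s permutes {1..m}" and "I \<subseteq> {0..m}"
  shows "(\<Prod>i\<in>I. f (s i)) = (\<Prod>v\<in>{0..m} - s ` ({0..m} - I). f v)"
proof -
  have "s ` I = {0..m} - s ` ({0..m} - I)"
    using assms permutes_image_atLeast0AtMost[OF assms(1)] permutes_inj[OF assms(1)]
    by (metis Diff_Diff_Int Int_absorb1 image_set_diff)
  then show ?thesis
    using prod.reindex[OF inj_on_subset[OF permutes_inj[OF assms(1)] subset_UNIV], of f I] by simp
qed

definition leaf_factor :: "nat \<Rightarrow> nat \<Rightarrow> rpoly" where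
  "leaf_factor m a = (\<Prod>v\<in>{0..m} - {a}. tvar (Suc m) - tvar v)"

lemma nonadjacent_pairs_Suc:
  "nonadjacent_pairs (Suc m) = nonadjacent_pairs m \<union> (\<lambda>i. (i, Suc m)) ` {0..<m}"
  by (auto simp: nonadjacent_pairs_def image_iff)

lemma Ps_Suc_fixing_top:
  fixes s :: "nat \<Rightarrow> nat"
  assumes s: "s permutes {1..m}"
  shows "Ps (Suc m) s = Ps m s * leaf_factor m (s m)"
proof -
  have "s (Suc m) = Suc m"
    by (rule permutes_not_in[OF s]) simp
  moreover have "nonadjacent_pairs m \<inter> (\<lambda>i. (i, Suc m)) ` {0..<m} = {}"
    by (auto simp: nonadjacent_pairs_def)
  ultimately have "Ps (Suc m) s = Ps m s * (\<Prod>i\<in>{0..<m}. tvar (Suc m) - tvar (s i))"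
    unfolding Ps_eq nonadjacent_pairs_Suc by (simp add: prod.union_disjoint prod.reindex inj_on_def)
  also have "(\<Prod>i\<in>{0..<m}. tvar (Suc m) - tvar (s i)) = leaf_factor m (s m)"
  proof -
    have "{0..<m} \<subseteq> {0..m}" "{0..m} - {0..<m} = {m}"
      by auto
    then show ?thesis
      unfolding leaf_factor_def
      using prod_permutes_image[OF s, of "{0..<m}" "\<lambda>v. tvar (Suc m) - tvar v"] by simp
  qed
  finally show ?thesis .
qed

text \<open>Composing with \<open>top_rotation m k\<close> inserts \<open>Suc m\<close> into the word \<open>s(1) \<dots> s(m)\<close>
  right after position \<open>k\<close>.\<close>
definition top_rotation :: "nat \<Rightarrow> nat \<Rightarrow> nat \<Rightarrow> nat" where
  "top_rotation m k i = (if i \<le> k \<or> Suc m < i then i else if i = Suc k then Suc m else i - 1)"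

lemma top_rotation_permutes:
  assumes "k \<le> m"
  shows "top_rotation m k permutes {1..Suc m}"
proof (rule bij_imp_permutes)
  have maps_to: "top_rotation m k ` {1..Suc m} \<subseteq> {1..Suc m}"
    by (auto simp: top_rotation_def)
  moreover have "inj_on (top_rotation m k) {1..Suc m}"
    using assms by (auto simp: inj_on_def top_rotation_def split: if_splits)
  ultimately show "bij_betw (top_rotation m k) {1..Suc m} {1..Suc m}"
    by (simp add: bij_betw_def endo_inj_surj)
  show "top_rotation m k i = i" if "i \<notin> {1..Suc m}" for i
    using that by (auto simp: top_rotation_def)
qed

lemma permutes_insert_top:
  fixes s :: "nat \<Rightarrow> nat"
  assumes "s permutes {1..m}" and "k \<le> m"
  shows "s \<circ> top_rotation m k permutes {1..Suc m}"
  by (rule permutes_compose[OF top_rotation_permutes[OF assms(2)] permutes_subset[OF assms(1)]]) auto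

definition skip_index :: "nat \<Rightarrow> nat \<Rightarrow> nat" where
  "skip_index k i = (if i \<le> k then i else Suc i)"

lemma nonadjacent_pairs_Suc_split:
  assumes "Suc k \<le> m"
  shows "nonadjacent_pairs (Suc m)
    = map_prod (skip_index k) (skip_index k) ` insert (k, Suc k) (nonadjacent_pairs m)
      \<union> (\<lambda>i. (i, Suc k)) ` {0..<k} \<union> (\<lambda>j. (Suc k, Suc j)) ` {Suc (Suc k)..m}"
    (is "_ = ?lifted \<union> ?left \<union> ?right")
proof (rule set_eqI, rule iffI)
  fix e assume e: "e \<in> nonadjacent_pairs (Suc m)"
  then obtain i j where ij: "e = (i, j)" "i < j" "j \<le> Suc m" "j \<noteq> Suc i"
    by (auto simp: nonadjacent_pairs_def)
  consider "j = Suc k" | "i = Suc k" | "i \<noteq> Suc k" "j \<noteq> Suc k"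
    by blast
  then show "e \<in> ?lifted \<union> ?left \<union> ?right"
  proof cases
    case 1
    then show ?thesis
      using ij by auto
  next
    case 2
    then have "e = (Suc k, Suc (j - 1))" "j - 1 \<in> {Suc (Suc k)..m}"
      using ij by auto
    then show ?thesis
      by blast
  next
    case 3
    define drop where "drop x = (if x \<le> k then x else x - 1)" for x
    have "skip_index k (drop x) = x" if "x \<noteq> Suc k" for x
      using that by (auto simp: skip_index_def drop_def)
    then have "e = map_prod (skip_index k) (skip_index k) (drop i, drop j)"
      using ij(1) 3 by simp
    moreover have "(drop i, drop j) \<in> insert (k, Suc k) (nonadjacent_pairs m)"
      using ij 3 assms by (auto simp: nonadjacent_pairs_def drop_def)
    ultimately show ?thesis
      by blast
  qed
next
  fix e assume "e \<in> ?lifted \<union> ?left \<union> ?right"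
  then show "e \<in> nonadjacent_pairs (Suc m)"
    using assms by (auto simp: nonadjacent_pairs_def skip_index_def split: if_splits)
qed

lemma top_rotation_skip_index: "i \<le> m \<Longrightarrow> top_rotation m k (skip_index k i) = i"
  by (auto simp: top_rotation_def skip_index_def)

lemma prod_insert_top_lifted_pairs:
  fixes s :: "nat \<Rightarrow> nat"
  assumes "Suc k \<le> m"
  shows "(\<Prod>e\<in>map_prod (skip_index k) (skip_index k) ` insert (k, Suc k) (nonadjacent_pairs m).
      tvar (s (top_rotation m k (snd e))) - tvar (s (top_rotation m k (fst e))))
    = (tvar (s (Suc k)) - tvar (s k)) * Ps m s"
proof -
  let ?skip = "map_prod (skip_index k) (skip_index k)"
  have "(k, Suc k) \<notin> nonadjacent_pairs m"
    by (simp add: nonadjacent_pairs_def)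
  have "inj ?skip"
    by (rule prod.inj_map) (auto simp: inj_def skip_index_def)
  then have "(\<Prod>e\<in>?skip ` insert (k, Suc k) (nonadjacent_pairs m).
      tvar (s (top_rotation m k (snd e))) - tvar (s (top_rotation m k (fst e))))
    = (\<Prod>e\<in>insert (k, Suc k) (nonadjacent_pairs m).
      tvar (s (top_rotation m k (snd (?skip e)))) - tvar (s (top_rotation m k (fst (?skip e)))))"
    by (rule prod.reindex_cong[OF inj_on_subset[OF _ subset_UNIV] refl]) simp_all
  also have "\<dots> = (\<Prod>e\<in>insert (k, Suc k) (nonadjacent_pairs m). tvar (s (snd e)) - tvar (s (fst e)))"
    by (rule prod.cong) (use assms in \<open>auto simp: nonadjacent_pairs_def top_rotation_skip_index\<close>)
  also have "\<dots> = (tvar (s (Suc k)) - tvar (s k)) * Ps m s"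
    using \<open>(k, Suc k) \<notin> nonadjacent_pairs m\<close> by (simp add: Ps_eq)
  finally show ?thesis .
qed

lemma prod_insert_top_pairs_at_top:
  fixes s :: "nat \<Rightarrow> nat"
  assumes s: "s permutes {1..m}" and k: "Suc k \<le> m"
  defines "F \<equiv> \<lambda>e. tvar (s (top_rotation m k (snd e))) - tvar (s (top_rotation m k (fst e)))"
  shows "(\<Prod>e\<in>(\<lambda>i. (i, Suc k)) ` {0..<k}. F e) * (\<Prod>e\<in>(\<lambda>j. (Suc k, Suc j)) ` {Suc (Suc k)..m}. F e)
    = (-1) ^ (m - Suc k) * (\<Prod>v\<in>{0..m} - {s k, s (Suc k)}. tvar (Suc m) - tvar v)"
proof -
  let ?Q = "\<lambda>v. tvar (Suc m) - tvar v"
  have top: "s (top_rotation m k (Suc k)) = Suc m"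
    using k permutes_not_in[OF s, of "Suc m"] by (simp add: top_rotation_def)
  have left: "(\<Prod>e\<in>(\<lambda>i. (i, Suc k)) ` {0..<k}. F e) = (\<Prod>i\<in>{0..<k}. ?Q (s i))"
    using k by (simp add: F_def prod.reindex inj_on_def top) (simp add: top_rotation_def)
  have "(\<Prod>e\<in>(\<lambda>j. (Suc k, Suc j)) ` {Suc (Suc k)..m}. F e) = (\<Prod>j\<in>{Suc (Suc k)..m}. - ?Q (s j))"
    by (simp add: F_def prod.reindex inj_on_def top) (simp add: top_rotation_def)
  also have "\<dots> = (-1) ^ (m - Suc k) * (\<Prod>j\<in>{Suc (Suc k)..m}. ?Q (s j))"
    by (subst prod_uminus) simp
  finally have right: "(\<Prod>e\<in>(\<lambda>j. (Suc k, Suc j)) ` {Suc (Suc k)..m}. F e)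
      = (-1) ^ (m - Suc k) * (\<Prod>j\<in>{Suc (Suc k)..m}. ?Q (s j))" .
  have "(\<Prod>i\<in>{0..<k}. ?Q (s i)) * (\<Prod>j\<in>{Suc (Suc k)..m}. ?Q (s j))
      = (\<Prod>i\<in>{0..<k} \<union> {Suc (Suc k)..m}. ?Q (s i))"
    by (rule prod.union_disjoint[symmetric]) auto
  also have "\<dots> = (\<Prod>v\<in>{0..m} - {s k, s (Suc k)}. ?Q v)"
  proof -
    have "{0..<k} \<union> {Suc (Suc k)..m} \<subseteq> {0..m}" "{0..m} - ({0..<k} \<union> {Suc (Suc k)..m}) = {k, Suc k}"
      using k by auto
    then show ?thesis
      using prod_permutes_image[OF s, of "{0..<k} \<union> {Suc (Suc k)..m}" ?Q] by simp
  qed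
  finally show ?thesis
    unfolding left right by (simp add: algebra_simps)
qed

lemma Ps_insert_top:
  fixes s :: "nat \<Rightarrow> nat"
  assumes s: "s permutes {1..m}" and k: "Suc k \<le> m"
  shows "Ps (Suc m) (s \<circ> top_rotation m k) = (-1) ^ (m - Suc k) *
    (Ps m s * ((tvar (s (Suc k)) - tvar (s k)) * (\<Prod>v\<in>{0..m} - {s k, s (Suc k)}. tvar (Suc m) - tvar v)))"
proof -
  let ?F = "\<lambda>e. tvar (s (top_rotation m k (snd e))) - tvar (s (top_rotation m k (fst e)))"
  define L where "L = map_prod (skip_index k) (skip_index k) ` insert (k, Suc k) (nonadjacent_pairs m)"
  define B where "B = (\<lambda>i. (i, Suc k)) ` {0..<k}"
  define C where "C = (\<lambda>j. (Suc k, Suc j)) ` {Suc (Suc k)..m}"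
  have "finite L" "finite B" "finite C"
    by (simp_all add: L_def B_def C_def)
  moreover have "L \<inter> (B \<union> C) = {}" "B \<inter> C = {}"
    by (auto simp: L_def B_def C_def skip_index_def split: if_splits)
  ultimately have "Ps (Suc m) (s \<circ> top_rotation m k) = prod ?F L * (prod ?F B * prod ?F C)"
    unfolding Ps_eq nonadjacent_pairs_Suc_split[OF k] Un_assoc L_def[symmetric] B_def[symmetric]
      C_def[symmetric]
    by (simp add: prod.union_disjoint)
  then show ?thesis
    unfolding L_def B_def C_def prod_insert_top_lifted_pairs[OF k] prod_insert_top_pairs_at_top[OF s k]
    by (simp add: algebra_simps)
qed

lemma span_neg_one_power: "x \<in> pspan S \<Longrightarrow> (-1) ^ e * x \<in> pspan S"
  by (cases "even e") (simp_all add: rpoly.span_neg)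

lemma span_mult_right:
  assumes "x \<in> pspan S" and "\<And>y. y \<in> S \<Longrightarrow> y * q \<in> pspan S'"
  shows "x * q \<in> pspan S'"
proof -
  have "pspan S \<subseteq> {x. x * q \<in> pspan S'}"
  proof (rule rpoly.span_minimal)
    show "S \<subseteq> {x. x * q \<in> pspan S'}"
      using assms(2) by blast
    show "rpoly.subspace {x. x * q \<in> pspan S'}"
      unfolding rpoly.subspace_def
      using rpoly.span_scale[of _ S'] by (simp add: distrib_right rpoly.span_zero rpoly.span_add pscale_def mult.assoc)
  qed
  then show ?thesis
    using assms(1) by blast
qed

lemma leaf_factor_diff:
  assumes "a \<noteq> b" "a \<le> m" "b \<le> m"
  shows "leaf_factor m a = leaf_factor m b
    - (tvar b - tvar a) * (\<Prod>v\<in>{0..m} - {a, b}. tvar (Suc m) - tvar v)"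
proof -
  let ?R = "\<Prod>v\<in>{0..m} - {a, b}. tvar (Suc m) - tvar v"
  have "{0..m} - {a} = insert b ({0..m} - {a, b})" "{0..m} - {b} = insert a ({0..m} - {a, b})"
    using assms by auto
  then have "leaf_factor m a = (tvar (Suc m) - tvar b) * ?R" "leaf_factor m b = (tvar (Suc m) - tvar a) * ?R"
    unfolding leaf_factor_def by (metis finite_Diff finite_atLeastAtMost insertCI prod.insert Diff_iff)+
  then show ?thesis
    by (simp add: algebra_simps)
qed

lemma Ps_mult_leaf_factor_in_span:
  fixes s :: "nat \<Rightarrow> nat"
  assumes s: "s permutes {1..m}" and "k \<le> m"
  shows "Ps m s * leaf_factor m (s k) \<in> pspan (Ps (Suc m) ` {s. s permutes {1..Suc m}})"
  using \<open>k \<le> m\<close>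
proof (induction "m - k" arbitrary: k)
  case 0
  then have "k = m"
    by simp
  moreover have "s permutes {1..Suc m}"
    by (rule permutes_subset[OF s]) auto
  ultimately show ?case
    using Ps_Suc_fixing_top[OF s] by (metis image_eqI mem_Collect_eq rpoly.span_base)
next
  case (Suc d)
  let ?S = "pspan (Ps (Suc m) ` {s. s permutes {1..Suc m}})"
  let ?R = "\<Prod>v\<in>{0..m} - {s k, s (Suc k)}. tvar (Suc m) - tvar v"
  have k: "Suc k \<le> m"
    using Suc by simp
  have "s k \<noteq> s (Suc k)" "s k \<le> m" "s (Suc k) \<le> m"
    using k by (simp_all add: inj_eq[OF permutes_inj[OF s]] permutes_le_iff[OF s])
  then have split: "Ps m s * leaf_factor m (s k)
      = Ps m s * leaf_factor m (s (Suc k)) - Ps m s * ((tvar (s (Suc k)) - tvar (s k)) * ?R)"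
    by (simp add: leaf_factor_diff right_diff_distrib)
  have "Ps m s * leaf_factor m (s (Suc k)) \<in> ?S"
    using Suc.hyps(1)[of "Suc k"] Suc.hyps(2) k by simp
  moreover have "Ps (Suc m) (s \<circ> top_rotation m k) \<in> ?S"
    using permutes_insert_top[OF s] k by (intro rpoly.span_base) auto
  then have "(-1) ^ (m - Suc k) * Ps (Suc m) (s \<circ> top_rotation m k) \<in> ?S"
    by (rule span_neg_one_power)
  then have "Ps m s * ((tvar (s (Suc k)) - tvar (s k)) * ?R) \<in> ?S"
    by (simp add: Ps_insert_top[OF s k] mult.assoc flip: power_mult_distrib)
  ultimately show ?case
    unfolding split by (rule rpoly.span_diff)
qed

section \<open>Spanning trees\<close>

lemma finite_spanning_tree: "spanning_tree n T \<Longrightarrow> finite T"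
  unfolding spanning_tree_def using finite_subset finite_cedges by blast

lemma spanning_treeD:
  assumes "spanning_tree n T"
  shows "T \<subseteq> cedges n"
    and "u \<le> n \<Longrightarrow> v \<le> n \<Longrightarrow> connects T u v"
    and "(i, j) \<in> T \<Longrightarrow> \<not> connects (T - {(i, j)}) i j"
  using assms unfolding spanning_tree_def by auto

lemma connects_remove_leaf:
  assumes leaf: "\<And>e. e \<in> T \<Longrightarrow> e \<noteq> (a, N) \<Longrightarrow> fst e \<noteq> N \<and> snd e \<noteq> N"
    and "a \<noteq> N" "u \<noteq> N" "v \<noteq> N" and "connects T u v"
  shows "connects (T - {(a, N)}) u v"
proof -
  let ?T' = "T - {(a, N)}"
  have "(y = N \<longrightarrow> connects ?T' u a) \<and> (y \<noteq> N \<longrightarrow> connects ?T' u y)" if "connects T u y" for y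
    using that
  proof (induction rule: connects_induct)
    case (step x y)
    show ?case
    proof (cases "x = N \<or> y = N")
      case True
      then have "x = N \<and> y = a \<or> x = a \<and> y = N"
        using step.hyps(2) leaf \<open>a \<noteq> N\<close> by fastforce
      then show ?thesis
        using step.IH \<open>a \<noteq> N\<close> by auto
    next
      case False
      then have "connects ?T' x y"
        using step.hyps(2) by (auto intro: connects_edge)
      then show ?thesis
        using step.IH False connects_trans by blast
    qed
  qed (simp add: \<open>u \<noteq> N\<close>)
  then show ?thesis
    using assms by blast
qed

text \<open>A cycle through an old edge \<open>(x, y)\<close> that uses the new edge between \<open>u\<close> and \<open>w\<close> could be
  rerouted through \<open>n\<close>, unless \<open>(x, y)\<close> is one of the two edges at \<open>n\<close>.\<close>
lemma exchange_keeps_old_edges_acyclic: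
  assumes T: "spanning_tree n T" and un: "(u, n) \<in> T" and wn: "(w, n) \<in> T" and "u \<noteq> w"
    and pq: "(p, q) \<notin> T" "{p, q} = {u, w}" and xy: "(x, y) \<in> T" "(x, y) \<noteq> (u, n)"
  shows "\<not> connects (insert (p, q) (T - {(u, n)}) - {(x, y)}) x y"
proof
  let ?S = "T - {(u, n)} - {(x, y)}"
  have acyc: "\<And>i j. (i, j) \<in> T \<Longrightarrow> \<not> connects (T - {(i, j)}) i j"
    using spanning_treeD(3)[OF T] by blast
  have S_xy: "connects ?S a b \<Longrightarrow> connects (T - {(x, y)}) a b" for a b
    by (rule connects_mono[rotated]) auto
  have S_un: "connects ?S a b \<Longrightarrow> connects (T - {(u, n)}) a b" for a b
    by (rule connects_mono[rotated]) auto
  have via_n: "connects (T - {(x, y)}) u w" if "(x, y) \<noteq> (w, n)"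
  proof -
    have "(u, n) \<in> T - {(x, y)}" "(w, n) \<in> T - {(x, y)}"
      using that un wn xy(2) by auto
    then show ?thesis
      by (meson connects_edge connects_trans)
  qed
  have "insert (p, q) (T - {(u, n)}) - {(x, y)} = insert (p, q) ?S"
    using xy(1) pq(1) by auto
  moreover assume "connects (insert (p, q) (T - {(u, n)}) - {(x, y)}) x y"
  ultimately have "connects ?S x y \<or> (connects ?S x u \<and> connects ?S w y) \<or> (connects ?S x w \<and> connects ?S u y)"
    using connects_insert[of p q ?S x y] pq(2) by (auto simp: doubleton_eq_iff)
  then show False
  proof (elim disjE conjE)
    assume "connects ?S x y"
    then show False
      using S_xy acyc[OF xy(1)] by blast
  next
    assume xu: "connects ?S x u" and wy: "connects ?S w y"
    show False
    proof (cases "(x, y) = (w, n)")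
      case True
      have "connects (T - {(w, n)}) u n"
        using un \<open>u \<noteq> w\<close> by (intro connects_edge) auto
      then show False
        using S_xy[OF xu] True acyc[OF wn] connects_trans by blast
    next
      case False
      then show False
        using S_xy[OF xu] via_n[OF False] S_xy[OF wy] acyc[OF xy(1)] connects_trans by blast
    qed
  next
    assume xw: "connects ?S x w" and uy: "connects ?S u y"
    show False
    proof (cases "(x, y) = (w, n)")
      case True
      then show False
        using S_un[OF uy] acyc[OF un] by simp
    next
      case False
      then show False
        using S_xy[OF xw] connects_sym[OF via_n[OF False]] S_xy[OF uy] acyc[OF xy(1)] connects_trans
        by blast
    qed
  qed
qed

lemma spanning_tree_exchange:
  assumes T: "spanning_tree n T" and un: "(u, n) \<in> T" and wn: "(w, n) \<in> T" and "u \<noteq> w"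
    and pq: "(p, q) \<in> cedges n" "(p, q) \<notin> T" "{p, q} = {u, w}"
  shows "spanning_tree n (insert (p, q) (T - {(u, n)}))"
proof -
  let ?T1 = "insert (p, q) (T - {(u, n)})"
  have new_edge: "connects ?T1 u w"
    using pq(3) connects_edge[of p q ?T1] by (auto simp: doubleton_eq_iff)
  have "connects ?T1 x y" if "x \<in> {0..n}" "y \<in> {0..n}" for x y
  proof (rule connects_subst[OF _ spanning_treeD(2)[OF T]])
    fix a b assume "(a, b) \<in> T"
    show "connects ?T1 a b"
    proof (cases "(a, b) = (u, n)")
      case True
      have "connects ?T1 w n"
        using wn \<open>u \<noteq> w\<close> by (intro connects_edge) auto
      with True show ?thesis
        using new_edge connects_trans by auto
    qed (use \<open>(a, b) \<in> T\<close> in \<open>auto intro: connects_edge\<close>)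
  qed (use that in auto)
  moreover have "\<not> connects (?T1 - {(p, q)}) p q"
  proof
    assume "connects (?T1 - {(p, q)}) p q"
    then have "connects (T - {(u, n)}) u w"
      using pq(2,3) connects_sym by (auto simp: doubleton_eq_iff insert_Diff_if)
    moreover have "connects (T - {(u, n)}) w n"
      using wn \<open>u \<noteq> w\<close> by (intro connects_edge) auto
    ultimately show False
      using spanning_treeD(3)[OF T un] connects_trans by blast
  qed
  ultimately show ?thesis
    using spanning_treeD(1)[OF T] pq(1) exchange_keeps_old_edges_acyclic[OF assms(1-4) pq(2,3)]
    unfolding spanning_tree_def by blast
qed

lemma span_Ps_mult_leaf_factor:
  assumes "x \<in> pspan (Ps m ` {s. s permutes {1..m}})" and "a \<le> m"
  shows "x * leaf_factor m a \<in> pspan (Ps (Suc m) ` {s. s permutes {1..Suc m}})"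
proof (rule span_mult_right[OF assms(1)])
  fix y assume "y \<in> Ps m ` {s. s permutes {1..m}}"
  then obtain s where s: "s permutes {1..m}" and y: "y = Ps m s"
    by blast
  have "inv s a \<le> m"
    using assms(2) by (simp add: permutes_le_iff[OF permutes_inv[OF s]])
  then show "y * leaf_factor m a \<in> pspan (Ps (Suc m) ` {s. s permutes {1..Suc m}})"
    using Ps_mult_leaf_factor_in_span[OF s, of "inv s a"] by (simp add: y permutes_inverses(1)[OF s])
qed

definition top_edges :: "nat \<Rightarrow> (nat \<times> nat) set \<Rightarrow> (nat \<times> nat) set" where
  "top_edges n T = {e \<in> T. snd e = n}"

lemma top_edges_nonempty:
  assumes "spanning_tree (Suc m) T"
  shows "top_edges (Suc m) T \<noteq> {}"
proof -
  have "connects T 0 (Suc m)"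
    using assms by (simp add: spanning_tree_def)
  then obtain e where "e \<in> T" "fst e = Suc m \<or> snd e = Suc m"
    using connects_imp_incident by blast
  moreover have "fst e < snd e" "snd e \<le> Suc m"
    using \<open>e \<in> T\<close> assms by (auto simp: spanning_tree_def cedges_def)
  ultimately have "e \<in> top_edges (Suc m) T"
    by (auto simp: top_edges_def)
  then show ?thesis
    by blast
qed

lemma spanning_tree_remove_leaf:
  assumes T: "spanning_tree (Suc m) T" and leaf: "top_edges (Suc m) T = {(a, Suc m)}"
  shows "spanning_tree m (T - {(a, Suc m)})"
proof -
  let ?T' = "T - {(a, Suc m)}"
  have sub: "T \<subseteq> cedges (Suc m)"
    using T by (simp add: spanning_tree_def)
  have other_edges: "fst e \<noteq> Suc m \<and> snd e \<noteq> Suc m" if "e \<in> T" "e \<noteq> (a, Suc m)" for e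
  proof -
    have "e \<notin> top_edges (Suc m) T" "fst e < snd e" "snd e \<le> Suc m"
      using that leaf sub by (auto simp: cedges_def)
    then show ?thesis
      using that(1) by (auto simp: top_edges_def)
  qed
  have "(a, Suc m) \<in> T"
    using leaf by (auto simp: top_edges_def)
  then have "a \<noteq> Suc m"
    using sub by (auto simp: cedges_def)
  have "?T' \<subseteq> cedges m"
    using sub other_edges by (fastforce simp: cedges_def)
  moreover have "connects ?T' x y" if "x \<in> {0..m}" "y \<in> {0..m}" for x y
    using that T \<open>a \<noteq> Suc m\<close> by (intro connects_remove_leaf[OF other_edges]) (auto simp: spanning_tree_def)
  moreover have "\<not> connects (?T' - {(i, j)}) i j" if "(i, j) \<in> ?T'" for i j
  proof
    assume "connects (?T' - {(i, j)}) i j"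
    then have "connects (T - {(i, j)}) i j"
      by (rule connects_mono[rotated]) auto
    then show False
      using spanning_treeD(3)[OF T] that by blast
  qed
  ultimately show ?thesis
    unfolding spanning_tree_def by blast
qed

lemma pY_remove_leaf:
  assumes T: "spanning_tree (Suc m) T" and leaf: "top_edges (Suc m) T = {(a, Suc m)}"
  shows "pY (cedges (Suc m) - T) = pY (cedges m - (T - {(a, Suc m)})) * leaf_factor m a"
proof -
  let ?B = "(\<lambda>v. (v, Suc m)) ` ({0..m} - {a})"
  have "T \<subseteq> cedges (Suc m)"
    using T by (simp add: spanning_tree_def)
  moreover have "(i, Suc m) \<in> T \<longleftrightarrow> i = a" for i
    using leaf[unfolded set_eq_iff, rule_format, of "(i, Suc m)"] by (auto simp: top_edges_def)
  ultimately have "cedges (Suc m) - T = (cedges m - (T - {(a, Suc m)})) \<union> ?B"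
    by (auto simp: cedges_def image_iff le_Suc_eq)
  moreover have "(cedges m - (T - {(a, Suc m)})) \<inter> ?B = {}"
    by (auto simp: cedges_def)
  ultimately show ?thesis
    by (simp add: pY_eq prod.union_disjoint prod.reindex inj_on_def leaf_factor_def)
qed

lemma spanning_tree_no_triangle:
  assumes T: "spanning_tree n T" and an: "(a, n) \<in> T" and bn: "(b, n) \<in> T" and "a < b"
  shows "(a, b) \<notin> T"
proof
  assume "(a, b) \<in> T"
  moreover have "b < n"
    using bn T by (auto simp: spanning_tree_def cedges_def)
  ultimately have "connects (T - {(a, n)}) a b" "connects (T - {(a, n)}) b n"
    using bn \<open>a < b\<close> by (auto intro: connects_edge)
  then have "connects (T - {(a, n)}) a n"
    by (rule connects_trans)
  then show False
    using spanning_treeD(3)[OF T an] by blast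
qed

lemma pY_exchange:
  assumes T: "spanning_tree n T" and an: "(a, n) \<in> T" and bn: "(b, n) \<in> T" and "a < b"
  shows "pY (cedges n - T)
    = pY (cedges n - insert (a, b) (T - {(a, n)})) - pY (cedges n - insert (a, b) (T - {(b, n)}))"
proof -
  have sub: "T \<subseteq> cedges n"
    using T by (simp add: spanning_tree_def)
  have "(a, b) \<notin> T"
    using spanning_tree_no_triangle[OF assms] .
  define R where "R = cedges n - T - {(a, b)}"
  have "finite R" "(a, b) \<notin> R" "(a, n) \<notin> R" "(b, n) \<notin> R"
    using an bn by (auto simp: R_def)
  moreover have "b \<le> n" "b \<noteq> n"
    using bn sub by (auto simp: cedges_def)
  then have "cedges n - T = insert (a, b) R"
    "cedges n - insert (a, b) (T - {(a, n)}) = insert (a, n) R"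
    "cedges n - insert (a, b) (T - {(b, n)}) = insert (b, n) R"
    using an bn sub \<open>a < b\<close> \<open>(a, b) \<notin> T\<close> by (auto simp: R_def cedges_def)
  ultimately show ?thesis
    by (simp add: pY_eq algebra_simps)
qed

lemma card_top_edges_pos:
  assumes "spanning_tree (Suc m) T"
  shows "0 < card (top_edges (Suc m) T)"
  using top_edges_nonempty[OF assms] finite_spanning_tree[OF assms]
  by (simp add: card_gt_0_iff top_edges_def)

lemma spanning_tree_leaf_decomposition:
  assumes T: "spanning_tree (Suc m) T" and "card (top_edges (Suc m) T) = 1"
  obtains a T' where "a \<le> m" "spanning_tree m T'"
    "pY (cedges (Suc m) - T) = pY (cedges m - T') * leaf_factor m a"
proof -
  obtain e where e: "top_edges (Suc m) T = {e}"
    using assms(2) card_1_singletonE by blast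
  moreover have "snd e = Suc m"
    using e by (auto simp: top_edges_def)
  ultimately have leaf: "top_edges (Suc m) T = {(fst e, Suc m)}"
    by (metis prod.collapse)
  then have "fst e \<le> m"
    using spanning_treeD(1)[OF T] by (auto simp: top_edges_def cedges_def)
  then show ?thesis
    using that spanning_tree_remove_leaf[OF T leaf] pY_remove_leaf[OF T leaf] by blast
qed

lemma spanning_tree_exchange_decomposition:
  assumes T: "spanning_tree n T" and "2 \<le> card (top_edges n T)"
  obtains T1 T2 where "spanning_tree n T1" "spanning_tree n T2"
    "card (top_edges n T1) < card (top_edges n T)" "card (top_edges n T2) < card (top_edges n T)"
    "pY (cedges n - T) = pY (cedges n - T1) - pY (cedges n - T2)"
proof -
  have fin: "finite (top_edges n T)"
    using finite_spanning_tree[OF T] by (simp add: top_edges_def)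
  have "\<not> card (top_edges n T) \<le> Suc 0"
    using assms(2) by simp
  then obtain e1 e2 where "e1 \<in> top_edges n T" "e2 \<in> top_edges n T" "e1 \<noteq> e2"
    using card_le_Suc0_iff_eq[OF fin] by blast
  then have "(fst e1, n) \<in> T" "(fst e2, n) \<in> T" "fst e1 \<noteq> fst e2"
    by (auto simp: top_edges_def prod_eq_iff) (metis prod.collapse)+
  then obtain a b where an: "(a, n) \<in> T" and bn: "(b, n) \<in> T" and "a < b"
    by (metis linorder_neqE_nat)
  have "b \<noteq> n" "(a, b) \<in> cedges n"
    using spanning_treeD(1)[OF T] bn \<open>a < b\<close> by (auto simp: cedges_def)
  have exchange: "spanning_tree n (insert (a, b) (T - {(c, n)}))
      \<and> card (top_edges n (insert (a, b) (T - {(c, n)}))) < card (top_edges n T)"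
    if "(c, n) \<in> T" "(c', n) \<in> T" "c \<noteq> c'" "{a, b} = {c, c'}" for c c'
  proof
    show "spanning_tree n (insert (a, b) (T - {(c, n)}))"
      using spanning_tree_exchange[OF T that(1-3) \<open>(a, b) \<in> cedges n\<close>
          spanning_tree_no_triangle[OF T an bn \<open>a < b\<close>]] that(4) by simp
    have "top_edges n (insert (a, b) (T - {(c, n)})) = top_edges n T - {(c, n)}"
      using \<open>b \<noteq> n\<close> by (auto simp: top_edges_def)
    moreover have "(c, n) \<in> top_edges n T"
      using that(1) by (simp add: top_edges_def)
    ultimately show "card (top_edges n (insert (a, b) (T - {(c, n)}))) < card (top_edges n T)"
      using card_Diff1_less[OF fin] by simp
  qed
  show ?thesis
    using that[of "insert (a, b) (T - {(a, n)})" "insert (a, b) (T - {(b, n)})"]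
      exchange[OF an bn] exchange[OF bn an] pY_exchange[OF T an bn \<open>a < b\<close>] \<open>a < b\<close>
    by (simp add: insert_commute)
qed

lemma pY_in_span_Ps:
  assumes "spanning_tree n T"
  shows "pY (cedges n - T) \<in> pspan (Ps n ` {s. s permutes {1..n}})"
  using assms
proof (induction n arbitrary: T)
  case 0
  have "cedges 0 = {}" "nonadjacent_pairs 0 = {}"
    by (auto simp: cedges_def nonadjacent_pairs_def)
  then have "pY (cedges 0 - T) = Ps 0 id" "id permutes {1..0::nat}"
    by (simp_all add: pY_eq Ps_eq permutes_id)
  then show ?case
    by (intro rpoly.span_base image_eqI[of _ _ id]) (simp_all add: id_def)
next
  case (Suc m)
  have "pY (cedges (Suc m) - T) \<in> pspan (Ps (Suc m) ` {s. s permutes {1..Suc m}})"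
    if "spanning_tree (Suc m) T" "card (top_edges (Suc m) T) = d" for d T
    using that
  proof (induction d arbitrary: T rule: less_induct)
    case (less d)
    consider "d = 1" | "2 \<le> d"
      using card_top_edges_pos[OF less.prems(1)] less.prems(2) by linarith
    then show ?case
    proof cases
      case 1
      with less.prems obtain a T' where "a \<le> m" "spanning_tree m T'"
        "pY (cedges (Suc m) - T) = pY (cedges m - T') * leaf_factor m a"
        by (blast elim: spanning_tree_leaf_decomposition)
      then show ?thesis
        using span_Ps_mult_leaf_factor[OF Suc.IH] by simp
    next
      case 2
      with less.prems obtain T1 T2 where "spanning_tree (Suc m) T1" "spanning_tree (Suc m) T2"
        "card (top_edges (Suc m) T1) < d" "card (top_edges (Suc m) T2) < d"
        "pY (cedges (Suc m) - T) = pY (cedges (Suc m) - T1) - pY (cedges (Suc m) - T2)"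
        by (blast elim: spanning_tree_exchange_decomposition)
      then show ?thesis
        using less.IH by (simp add: rpoly.span_diff)
    qed
  qed
  then show ?case
    using Suc.prems by blast
qed

theorem corollary3p2:
  fixes n :: nat
  shows "inj_on (Ps n) {s. s permutes {1..n}}
    \<and> \<not> pdependent (Ps n ` {s. s permutes {1..n}})
    \<and> pspan (Ps n ` {s. s permutes {1..n}})
        = pspan {pY (cedges n - T) | T. spanning_tree n T}"
proof (intro conjI)
  show "inj_on (Ps n) {s. s permutes {1..n}}"
    by (rule inj_on_Ps)
  show "\<not> pdependent (Ps n ` {s. s permutes {1..n}})"
    by (rule not_pdependent_Ps)
  show "pspan (Ps n ` {s. s permutes {1..n}}) = pspan {pY (cedges n - T) | T. spanning_tree n T}"
    unfolding rpoly.span_eq using Ps_in_span_pY pY_in_span_Ps by blast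
qed

end
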